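(* Fix $\varepsilon\in(0,\tfrac12)$ and let $r=r(n)>0$ with $r=o(\sqrt n)$. There is $n_0$ such that for all $n\ge n_0$ the following deterministic statement holds. Let $G$ be a graph on a finite vertex set $V$, let $(\mathbf X_v)_{v\in V}$ be points of $\mathcal S_n$, let $v_1,\dots,v_4\in V$ be distinct, and put $V^-=V\setminus\{v_1,\dots,v_4\}$. Suppose that for every $i\in\{1,2,3,4\}$ and every $v\in V^-$, $$r\big(d_G(v,v_i)+\varepsilon/3\big)\ \ge\ \|\mathbf X_v-c_i\|_2\ \ge\ r\big(d_G(v,v_i)-(1+\varepsilon/3)\big).$$ Then for every $j\in\{1,2,3,4\}$ and every $v\in V^-$ with $d_G(v,v_j)=\min_{1\le i\le4}d_G(v,v_i)$, the point $\mathbf X_v$ lies within Euclidean distance at most $r$ of the quarter $Q(n,j)$.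
   Context: $\mathcal S_n=[-\sqrt n/2,\sqrt n/2]^2$ with corners $c_1=(-\sqrt n/2,-\sqrt n/2)$, $c_2=(-\sqrt n/2,\sqrt n/2)$, $c_3=(\sqrt n/2,\sqrt n/2)$, $c_4=(\sqrt n/2,-\sqrt n/2)$. $Q(n,j)$ is the closed quarter of $\mathcal S_n$ (one of the four $\tfrac{\sqrt n}{2}\times\tfrac{\sqrt n}{2}$ subsquares having the origin as a corner) containing $c_j$. $d_G$ denotes graph distance in $G$. *)

theory Defs
  imports "HOL-Analysis.Analysis" "HOL-Library.Landau_Symbols" "HOL-Library.Extended_Real"
begin

definition gwalk :: "'a set \<Rightarrow> ('a \<Rightarrow> 'a \<Rightarrow> bool) \<Rightarrow> 'a list \<Rightarrow> bool" where
  "gwalk V E xs \<longleftrightarrow> xs \<noteq> [] \<and> set xs \<subseteq> V \<and> (\<forall>i < length xs - 1. E (xs ! i) (xs ! Suc i))"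

text \<open>Graph distance (infinity if no path).\<close>
definition gdist :: "'a set \<Rightarrow> ('a \<Rightarrow> 'a \<Rightarrow> bool) \<Rightarrow> 'a \<Rightarrow> 'a \<Rightarrow> enat" where
  "gdist V E u w = (INF xs \<in> {xs. gwalk V E xs \<and> hd xs = u \<and> last xs = w}. enat (length xs - 1))"

definition sgnx :: "nat \<Rightarrow> real" where "sgnx j = (if j \<in> {1,2} then -1 else 1)"
definition sgny :: "nat \<Rightarrow> real" where "sgny j = (if j \<in> {1,4} then -1 else 1)"

definition square :: "nat \<Rightarrow> (real^2) set" where
  "square n = {x. \<bar>x$1\<bar> \<le> sqrt (real n) / 2 \<and> \<bar>x$2\<bar> \<le> sqrt (real n) / 2}"

definition corner :: "nat \<Rightarrow> nat \<Rightarrow> real^2" where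
  "corner n j = vector [sgnx j * sqrt (real n) / 2, sgny j * sqrt (real n) / 2]"

definition quarter :: "nat \<Rightarrow> nat \<Rightarrow> (real^2) set" where
  "quarter n j = {x. 0 \<le> sgnx j * x$1 \<and> sgnx j * x$1 \<le> sqrt (real n) / 2
                   \<and> 0 \<le> sgny j * x$2 \<and> sgny j * x$2 \<le> sqrt (real n) / 2}"

end

theory Submission
  imports Defs
begin

text \<open>
  If \<open>v\<close> is graph-closest to \<open>v\<^sub>j\<close>, the two-sided distance bounds give
  \<open>\<parallel>X\<^sub>v - c\<^sub>j\<parallel> - \<parallel>X\<^sub>v - c\<^sub>i\<parallel> \<le> r (1 + 2\<epsilon>/3) < 4r/3\<close> for every corner \<open>c\<^sub>i\<close>.
  Measure how far \<open>X\<^sub>v\<close> leaves \<open>Q(n,j)\<close> by the negative parts \<open>m\<close> of its coordinates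
  oriented towards \<open>c\<^sub>j\<close>; this sum bounds the distance to \<open>Q(n,j)\<close>. Comparing with the
  corner \<open>c\<^sub>k\<close> of the quarter that actually contains \<open>X\<^sub>v\<close>, one gets
  \<open>\<parallel>X\<^sub>v - c\<^sub>j\<parallel>\<^sup>2 - \<parallel>X\<^sub>v - c\<^sub>k\<parallel>\<^sup>2 = 2\<surd>n m\<close>, while \<open>\<parallel>X\<^sub>v - c\<^sub>k\<parallel> \<le> \<surd>(n/2)\<close>; a difference of
  squares argument then yields \<open>m \<le> r\<close> as soon as \<open>r \<le> \<surd>n/100\<close>.
\<close>

lemma norm_vec2: "norm (x :: real^2) = sqrt ((x$1)\<^sup>2 + (x$2)\<^sup>2)"
  by (simp add: norm_eq_sqrt_inner inner_vec_def sum_2 power2_eq_square)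

lemma sgnx_cases: "sgnx j = 1 \<or> sgnx j = -1"
  and sgny_cases: "sgny j = 1 \<or> sgny j = -1"
  by (auto simp: sgnx_def sgny_def)

lemma corner_index_of_signs:
  fixes x y :: real
  obtains k where "k \<in> {1..4}" "sgnx k * x = \<bar>x\<bar>" "sgny k * y = \<bar>y\<bar>"
proof -
  have "\<exists>k\<in>{1..4::nat}. sgnx k * x = \<bar>x\<bar> \<and> sgny k * y = \<bar>y\<bar>"
  proof (cases "0 \<le> x"; cases "0 \<le> y")
    assume "0 \<le> x" "0 \<le> y" then show ?thesis by (intro bexI[of _ 3]) (auto simp: sgnx_def sgny_def)
  next
    assume "0 \<le> x" "\<not> 0 \<le> y" then show ?thesis by (intro bexI[of _ 4]) (auto simp: sgnx_def sgny_def)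
  next
    assume "\<not> 0 \<le> x" "0 \<le> y" then show ?thesis by (intro bexI[of _ 2]) (auto simp: sgnx_def sgny_def)
  next
    assume "\<not> 0 \<le> x" "\<not> 0 \<le> y" then show ?thesis by (intro bexI[of _ 1]) (auto simp: sgnx_def sgny_def)
  qed
  then show thesis using that by blast
qed

lemma norm_diff_corner_sq:
  "(norm (X - corner n i))\<^sup>2
     = (sgnx i * X$1 - sqrt (real n) / 2)\<^sup>2 + (sgny i * X$2 - sqrt (real n) / 2)\<^sup>2"
proof -
  have "(norm (X - corner n i))\<^sup>2
      = (X$1 - sgnx i * sqrt (real n) / 2)\<^sup>2 + (X$2 - sgny i * sqrt (real n) / 2)\<^sup>2"
    by (simp add: norm_vec2 corner_def)
  then show ?thesis
    using sgnx_cases[of i] sgny_cases[of i] by (auto simp: power2_eq_square algebra_simps)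
qed

lemma infdist_quarter_le:
  assumes "X \<in> square n"
  shows "infdist X (quarter n j) \<le> max 0 (- (sgnx j * X$1)) + max 0 (- (sgny j * X$2))"
proof -
  define u w where "u = sgnx j * X$1" and "w = sgny j * X$2"
  define p :: "real^2" where "p = vector [sgnx j * max 0 u, sgny j * max 0 w]"
  have sq: "sgnx j * sgnx j = 1" "sgny j * sgny j = 1"
    using sgnx_cases[of j] sgny_cases[of j] by auto
  have "\<bar>u\<bar> \<le> sqrt (real n) / 2" "\<bar>w\<bar> \<le> sqrt (real n) / 2"
    using assms sgnx_cases[of j] sgny_cases[of j] by (auto simp: square_def u_def w_def)
  then have "p \<in> quarter n j"
    by (auto simp: quarter_def p_def mult.assoc[symmetric] sq)
  have "\<bar>X$1 - p$1\<bar> = max 0 (- u)" "\<bar>X$2 - p$2\<bar> = max 0 (- w)"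
    using sgnx_cases[of j] sgny_cases[of j] by (auto simp: p_def u_def w_def)
  then have "dist X p \<le> max 0 (- u) + max 0 (- w)"
    using norm_le_l1_cart[of "X - p"] by (simp add: dist_norm sum_2)
  with \<open>p \<in> quarter n j\<close> show ?thesis
    unfolding u_def w_def by (meson infdist_le order_trans)
qed

lemma diff_squares_le_of_diff_le:
  fixes a b r S :: real
  assumes "0 \<le> a" "0 \<le> b" "a - b \<le> 4/3 * r" "b\<^sup>2 \<le> 2 * S\<^sup>2" "0 < r" "r \<le> S / 50"
  shows "a\<^sup>2 - b\<^sup>2 \<le> 4 * S * r"
proof (cases "a \<le> b")
  case True
  then have "a\<^sup>2 \<le> b\<^sup>2" using assms(1) by (simp add: power_mono)
  moreover have "0 \<le> 4 * S * r" using assms(5,6) by simp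
  ultimately show ?thesis by linarith
next
  case False
  have "0 < S" using assms(5,6) by simp
  have "b \<le> 142/100 * S"
  proof (rule ccontr)
    assume "\<not> ?thesis"
    then have "(142/100 * S)\<^sup>2 < b\<^sup>2" using \<open>0 < S\<close> by (intro power_strict_mono) auto
    moreover have "(142/100 * S)\<^sup>2 = 5041/2500 * S\<^sup>2" by (simp add: power2_eq_square)
    moreover have "0 \<le> S\<^sup>2" by simp
    ultimately show False using assms(4) by linarith
  qed
  have "a\<^sup>2 - b\<^sup>2 = (a - b) * (a + b)" by (simp add: power2_eq_square algebra_simps)
  also have "\<dots> \<le> (4/3 * r) * (2 * b + 4/3 * r)"
    using assms False by (intro mult_mono) auto
  also have "\<dots> \<le> (4/3 * r) * (2 * (142/100 * S) + 4/3 * (S / 50))"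
    using assms \<open>b \<le> _\<close> by (intro mult_left_mono) auto
  also have "\<dots> \<le> 4 * S * r"
    using assms(5) \<open>0 < S\<close> by (simp add: algebra_simps)
  finally show ?thesis .
qed

lemma sq_diff_sq_abs_diff:
  fixes t S :: real
  shows "(t - S)\<^sup>2 - (\<bar>t\<bar> - S)\<^sup>2 = 4 * S * max 0 (- t)"
  by (cases "0 \<le> t") (auto simp: power2_eq_square algebra_simps)

lemma norm_diff_corner_sq_diff:
  assumes "X \<in> square n" "sgnx k * X$1 = \<bar>X$1\<bar>" "sgny k * X$2 = \<bar>X$2\<bar>"
  shows "(norm (X - corner n j))\<^sup>2 - (norm (X - corner n k))\<^sup>2
           = 2 * sqrt (real n) * (max 0 (- (sgnx j * X$1)) + max 0 (- (sgny j * X$2)))"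
    and "(norm (X - corner n k))\<^sup>2 \<le> 2 * (sqrt (real n) / 2)\<^sup>2"
proof -
  define S where "S = sqrt (real n) / 2"
  define u w where "u = sgnx j * X$1" and "w = sgny j * X$2"
  have abs_uw: "\<bar>u\<bar> = \<bar>X$1\<bar>" "\<bar>w\<bar> = \<bar>X$2\<bar>"
    using sgnx_cases[of j] sgny_cases[of j] by (auto simp: u_def w_def)
  have in_square: "\<bar>X$1\<bar> \<le> S" "\<bar>X$2\<bar> \<le> S"
    using assms(1) by (auto simp: square_def S_def)
  have k: "(norm (X - corner n k))\<^sup>2 = (\<bar>u\<bar> - S)\<^sup>2 + (\<bar>w\<bar> - S)\<^sup>2"
    using norm_diff_corner_sq[of X n k] assms(2,3) by (simp add: abs_uw S_def)
  have j: "(norm (X - corner n j))\<^sup>2 = (u - S)\<^sup>2 + (w - S)\<^sup>2"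
    using norm_diff_corner_sq[of X n j] by (simp add: u_def w_def S_def)
  show "(norm (X - corner n j))\<^sup>2 - (norm (X - corner n k))\<^sup>2
           = 2 * sqrt (real n) * (max 0 (- u) + max 0 (- w))"
    using sq_diff_sq_abs_diff[of u S] sq_diff_sq_abs_diff[of w S]
    unfolding j k S_def by (simp add: algebra_simps)
  have "(\<bar>u\<bar> - S)\<^sup>2 \<le> S\<^sup>2" "(\<bar>w\<bar> - S)\<^sup>2 \<le> S\<^sup>2"
    using in_square abs_uw by (auto intro!: power2_le_iff_abs_le[THEN iffD2])
  then show "(norm (X - corner n k))\<^sup>2 \<le> 2 * (sqrt (real n) / 2)\<^sup>2"
    unfolding k S_def by simp
qed

lemma infdist_quarter_le_of_nearly_closest_corner:
  fixes X :: "real^2" and r :: real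
  assumes "X \<in> square n"
    and "\<And>i. i \<in> {1..4} \<Longrightarrow> norm (X - corner n j) - norm (X - corner n i) \<le> 4/3 * r"
    and "0 < r" "r \<le> sqrt (real n) / 100"
  shows "infdist X (quarter n j) \<le> r"
proof -
  define m where "m = max 0 (- (sgnx j * X$1)) + max 0 (- (sgny j * X$2))"
  obtain k where k: "k \<in> {1..4}" "sgnx k * X$1 = \<bar>X$1\<bar>" "sgny k * X$2 = \<bar>X$2\<bar>"
    by (rule corner_index_of_signs)
  note diff_sq = norm_diff_corner_sq_diff(1)[OF assms(1) k(2,3), of j]
    and near_sq = norm_diff_corner_sq_diff(2)[OF assms(1) k(2,3)]
  have "(norm (X - corner n j))\<^sup>2 - (norm (X - corner n k))\<^sup>2 \<le> 4 * (sqrt (real n) / 2) * r"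
    using assms(2)[OF k(1)] near_sq assms(3,4)
    by (intro diff_squares_le_of_diff_le) auto
  then have "sqrt (real n) * m \<le> sqrt (real n) * r"
    using diff_sq unfolding m_def by simp
  moreover have "0 < sqrt (real n)" using assms(3,4) by linarith
  ultimately have "m \<le> r" by simp
  then show ?thesis
    using infdist_quarter_le[OF assms(1), of j] unfolding m_def by linarith
qed

lemma diff_le_of_ereal_dist_bounds:
  fixes r a b x y :: real and d e :: enat
  assumes "0 < r" "d \<le> e"
    and "ereal x \<le> ereal r * (ereal_of_enat d + ereal a)"
    and "ereal r * (ereal_of_enat e - ereal b) \<le> ereal y"
  shows "x - y \<le> r * (a + b)"
proof -
  obtain l where l: "e = enat l"
    using assms(1,4) by (cases e) auto
  then obtain k where k: "d = enat k" "k \<le> l"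
    using assms(2) by (cases d) auto
  have "x \<le> r * (real k + a)" "r * (real l - b) \<le> y"
    using assms(3,4) k l by auto
  moreover have "r * real k \<le> r * real l"
    using assms(1) k(2) by simp
  ultimately show ?thesis by (simp add: algebra_simps)
qed

theorem lemma4p1:
  fixes \<epsilon> :: real and r :: "nat \<Rightarrow> real"
  assumes "0 < \<epsilon>" "\<epsilon> < 1/2"
    and "\<And>n. r n > 0"
    and "r \<in> o(\<lambda>n. sqrt (real n))"
  shows "\<exists>n0. \<forall>n\<ge>n0. \<forall>(V :: nat set) E X vs.
     finite V \<longrightarrow> (\<forall>u w. E u w \<longrightarrow> E w u) \<longrightarrow> (\<forall>u. \<not> E u u) \<longrightarrow>
     (\<forall>v\<in>V. X v \<in> square n) \<longrightarrow>
     vs ` {1..4} \<subseteq> V \<longrightarrow> inj_on vs {1..4} \<longrightarrow>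
     (\<forall>i\<in>{1..4}. \<forall>v \<in> V - vs ` {1..4}.
        ereal (r n) * (ereal_of_enat (gdist V E v (vs i)) + ereal (\<epsilon>/3)) \<ge> ereal (norm (X v - corner n i))
      \<and> ereal (norm (X v - corner n i)) \<ge> ereal (r n) * (ereal_of_enat (gdist V E v (vs i)) - ereal (1 + \<epsilon>/3))) \<longrightarrow>
     (\<forall>j\<in>{1..4}. \<forall>v \<in> V - vs ` {1..4}.
        gdist V E v (vs j) = (MIN i\<in>{1..4}. gdist V E v (vs i)) \<longrightarrow>
        infdist (X v) (quarter n j) \<le> r n)"
proof -
  have "\<forall>\<^sub>F n in sequentially. norm (r n) \<le> 1/100 * norm (sqrt (real n))"
    by (rule landau_o.smallD[OF assms(4)]) simp
  then obtain n0 where n0: "\<And>n. n \<ge> n0 \<Longrightarrow> r n \<le> sqrt (real n) / 100"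
    using assms(3) by (auto simp: eventually_sequentially less_imp_le)
  show ?thesis
  proof (intro exI[of _ n0] allI impI ballI)
    fix n V E X vs j v
    assume "n0 \<le> n" and "\<forall>v\<in>V. X v \<in> square n"
      and bounds: "\<forall>i\<in>{1..4}. \<forall>v \<in> V - vs ` {1..4}.
        ereal (r n) * (ereal_of_enat (gdist V E v (vs i)) + ereal (\<epsilon>/3)) \<ge> ereal (norm (X v - corner n i))
      \<and> ereal (norm (X v - corner n i)) \<ge> ereal (r n) * (ereal_of_enat (gdist V E v (vs i)) - ereal (1 + \<epsilon>/3))"
      and j: "j \<in> {1..4}" and v: "v \<in> V - vs ` {1..4}"
      and closest: "gdist V E v (vs j) = (MIN i\<in>{1..4}. gdist V E v (vs i))"
    have "norm (X v - corner n j) - norm (X v - corner n i) \<le> 4/3 * r n" if "i \<in> {1..4}" for i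
    proof -
      have "gdist V E v (vs j) \<le> gdist V E v (vs i)"
        unfolding closest using that by simp
      then have "norm (X v - corner n j) - norm (X v - corner n i) \<le> r n * (\<epsilon>/3 + (1 + \<epsilon>/3))"
        using bounds v j that assms(3) by (intro diff_le_of_ereal_dist_bounds) auto
      moreover have "r n * (\<epsilon>/3 + (1 + \<epsilon>/3)) \<le> r n * (4/3)"
        using assms(2) assms(3)[of n] by (intro mult_left_mono) auto
      ultimately show ?thesis by linarith
    qed
    then show "infdist (X v) (quarter n j) \<le> r n"
      using \<open>\<forall>v\<in>V. X v \<in> square n\<close> v n0[OF \<open>n0 \<le> n\<close>] assms(3)
      by (intro infdist_quarter_le_of_nearly_closest_corner) auto
  qed
qed

end
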